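(* Fix $A>0$ and, for $q\in[1,\infty]$, let $v_q=\sup\{y_V(1): V\in L^q[0,1],\ \|V\|_{L^q}\le A\}$. Then $q\mapsto v_q$ is non-increasing on $[1,\infty]$, and $v_q\to v_1$ as $q\to1^+$.
   Context: For real-valued $V\in L^q[0,1]$, $y_V$ denotes the solution of $-y''+Vy=0$ on $[0,1]$ with $y(0)=0$, $y'(0)=1$. Solutions are understood in the Carathéodory sense: $y_V,y_V'$ are absolutely continuous, and the equation holds a.e. *)

theory Defs
  imports "HOL-Analysis.Analysis" "HOL-Probability.Probability"
begin

abbreviation I01 :: "real measure" where "I01 \<equiv> lebesgue_on {0..1}"

definition in_Lq :: "ereal \<Rightarrow> (real \<Rightarrow> real) \<Rightarrow> bool" where
  "in_Lq q V \<longleftrightarrow> V \<in> borel_measurable I01 \<and>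
     (if q = \<infinity> then esssup I01 (\<lambda>x. ereal \<bar>V x\<bar>) < \<infinity>
      else integrable I01 (\<lambda>x. \<bar>V x\<bar> powr real_of_ereal q))"

definition Lq_norm :: "ereal \<Rightarrow> (real \<Rightarrow> real) \<Rightarrow> real" where
  "Lq_norm q V =
     (if q = \<infinity> then real_of_ereal (esssup I01 (\<lambda>x. ereal \<bar>V x\<bar>))
      else (integral\<^sup>L I01 (\<lambda>x. \<bar>V x\<bar> powr real_of_ereal q)) powr (1 / real_of_ereal q))"

text \<open>Carath\'eodory solution of -y'' + V y = 0 on [0,1], y(0)=0, y'(0)=1,
  written in the equivalent integral form: y' = z, where z is absolutely continuous
  with z' = V y a.e., i.e. y(t) = \<int>_0^t z and z(t) = 1 + \<int>_0^t V y.\<close>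
definition is_sol :: "(real \<Rightarrow> real) \<Rightarrow> (real \<Rightarrow> real) \<Rightarrow> bool" where
  "is_sol V y \<longleftrightarrow> (\<exists>z. continuous_on {0..1} y \<and> continuous_on {0..1} z \<and>
     y 0 = 0 \<and> z 0 = 1 \<and>
     (\<lambda>s. V s * y s) absolutely_integrable_on {0..1} \<and>
     (\<forall>t\<in>{0..1}. (z has_integral (y t - y 0)) {0..t}) \<and>
     (\<forall>t\<in>{0..1}. ((\<lambda>s. V s * y s) has_integral (z t - z 0)) {0..t}))"

definition vq :: "real \<Rightarrow> ereal \<Rightarrow> real" where
  "vq A q = Sup {y 1 | V y. in_Lq q V \<and> Lq_norm q V \<le> A \<and> is_sol V y}"

end

theory Submission
  imports Defs
begin

text \<open>The L^q norms on the probability space [0,1] increase with q, so the admissible potentials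
  shrink as q grows and v_q decreases; all v_q are finite because Gronwall's inequality for the
  first-order system y' = z, z' = V y bounds y_V in terms of the L^1 norm of V.

  For the limit q -> 1+, take an admissible V in L^1 with y_V(1) close to v_1. Truncating V and
  shrinking it slightly gives a bounded W with L^1 norm strictly below A and with V - W small in
  L^1. By continuous dependence (again Gronwall), y_W(1) is close to y_V(1), and since the L^q norm
  of a bounded function tends to its L^1 norm as q -> 1+, W is admissible for all q close to 1.
  Solutions for bounded W exist by Picard iteration.\<close>

section \<open>L^q norms on a probability space\<close>

lemma powr_ge_tangent:
  fixes c x r :: real
  assumes r: "1 \<le> r" and c: "0 < c" and x: "0 \<le> x"
  shows "c powr r + r * c powr (r - 1) * (x - c) \<le> x powr r"
proof (cases "x = 0")
  case True
  have "c * c powr (r - 1) = c powr r" using c by (simp add: powr_diff)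
  moreover have "c powr r \<le> r * c powr r" using r c by simp
  ultimately show ?thesis using True by (simp add: algebra_simps)
next
  case False
  have "x powr r - c powr r \<ge> r * c powr (r - 1) * (x - c)"
    using False x c r
    by (intro convex_on_imp_above_tangent[OF powr_convex[OF r], of c x, simplified])
       (auto simp: interior_open intro!: derivative_eq_intros)
  then show ?thesis by simp
qed

lemma (in prob_space) powr_expectation_le:
  fixes f :: "'a \<Rightarrow> real"
  assumes r: "1 \<le> r" and f: "integrable M f" and fr: "integrable M (\<lambda>x. f x powr r)"
    and nonneg: "\<And>x. 0 \<le> f x"
  shows "expectation f powr r \<le> expectation (\<lambda>x. f x powr r)"
proof -
  define c where "c = expectation f"
  have "0 \<le> c" unfolding c_def using nonneg by simp
  show ?thesis
  proof (cases "c = 0")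
    case True
    then show ?thesis unfolding c_def by simp
  next
    case False
    with \<open>0 \<le> c\<close> have c: "0 < c" by simp
    have "c powr r = expectation (\<lambda>x. c powr r + r * c powr (r - 1) * (f x - c))"
      using f prob_space by (simp add: c_def)
    also have "\<dots> \<le> expectation (\<lambda>x. f x powr r)"
      using f fr powr_ge_tangent[OF r c nonneg] by (intro integral_mono) auto
    finally show ?thesis unfolding c_def .
  qed
qed

lemma (in finite_measure) integrable_abs_powr_mono:
  fixes f :: "'a \<Rightarrow> real"
  assumes p: "0 \<le> p" "p \<le> q" and [measurable]: "f \<in> borel_measurable M"
    and fq: "integrable M (\<lambda>x. \<bar>f x\<bar> powr q)"
  shows "integrable M (\<lambda>x. \<bar>f x\<bar> powr p)"
proof (rule Bochner_Integration.integrable_bound)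
  show "integrable M (\<lambda>x. 1 + \<bar>f x\<bar> powr q)" using fq by simp
  have "\<bar>f x\<bar> powr p \<le> 1 + \<bar>f x\<bar> powr q" for x
  proof (cases "\<bar>f x\<bar> \<le> 1")
    case True
    then have "\<bar>f x\<bar> powr p \<le> 1 powr p" using p by (intro powr_mono2) auto
    then show ?thesis by (simp add: add_increasing2)
  next
    case False
    then have "\<bar>f x\<bar> powr p \<le> \<bar>f x\<bar> powr q" using p by (intro powr_mono) auto
    then show ?thesis by simp
  qed
  then show "AE x in M. norm (\<bar>f x\<bar> powr p) \<le> norm (1 + \<bar>f x\<bar> powr q)" by simp
qed measurable

lemma (in finite_measure) integrable_abs_powr_bounded:
  fixes f :: "'a \<Rightarrow> real"
  assumes [measurable]: "f \<in> borel_measurable M" and bound: "\<And>x. x \<in> space M \<Longrightarrow> \<bar>f x\<bar> \<le> B"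
    and q: "0 \<le> q"
  shows "integrable M (\<lambda>x. \<bar>f x\<bar> powr q)"
  by (rule Bochner_Integration.integrable_bound[of _ "\<lambda>x. B powr q"])
     (use bound q in \<open>auto intro!: AE_I2 powr_mono2\<close>)

lemma (in prob_space) Lp_norm_mono:
  fixes f :: "'a \<Rightarrow> real"
  assumes p: "1 \<le> p" "p \<le> q" and [measurable]: "f \<in> borel_measurable M"
    and fq: "integrable M (\<lambda>x. \<bar>f x\<bar> powr q)"
  shows "expectation (\<lambda>x. \<bar>f x\<bar> powr p) powr (1/p) \<le> expectation (\<lambda>x. \<bar>f x\<bar> powr q) powr (1/q)"
proof -
  define r where "r = q / p"
  have r: "1 \<le> r" and rp: "p * r = q" unfolding r_def using p by auto
  have "expectation (\<lambda>x. \<bar>f x\<bar> powr p) powr r \<le> expectation (\<lambda>x. (\<bar>f x\<bar> powr p) powr r)"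
    using p fq rp
    by (intro powr_expectation_le r integrable_abs_powr_mono[of p q]) (auto simp: powr_powr)
  then have "expectation (\<lambda>x. \<bar>f x\<bar> powr p) powr r \<le> expectation (\<lambda>x. \<bar>f x\<bar> powr q)"
    by (simp add: powr_powr rp)
  then have "(expectation (\<lambda>x. \<bar>f x\<bar> powr p) powr r) powr (1/q)
      \<le> expectation (\<lambda>x. \<bar>f x\<bar> powr q) powr (1/q)"
    using p by (intro powr_mono2) auto
  moreover have "r / q = 1 / p" using p unfolding r_def by simp
  ultimately show ?thesis by (simp add: powr_powr)
qed

lemma (in prob_space) Lp_norm_le_esssup:
  fixes f :: "'a \<Rightarrow> real"
  assumes p: "0 < p" and [measurable]: "f \<in> borel_measurable M"
    and ess: "esssup M (\<lambda>x. ereal \<bar>f x\<bar>) < \<infinity>"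
  shows "integrable M (\<lambda>x. \<bar>f x\<bar> powr p)"
    and "expectation (\<lambda>x. \<bar>f x\<bar> powr p) powr (1/p) \<le> real_of_ereal (esssup M (\<lambda>x. ereal \<bar>f x\<bar>))"
proof -
  define E where "E = esssup M (\<lambda>x. ereal \<bar>f x\<bar>)"
  have "esssup M (\<lambda>x. ereal 0) \<le> E" unfolding E_def by (rule esssup_mono) auto
  then have "0 \<le> E" using esssup_const[of M "ereal 0"] emeasure_space_1 by (simp add: zero_ereal_def)
  moreover have "E < \<infinity>" using ess unfolding E_def .
  ultimately obtain e where Ee: "E = ereal e" and e: "0 \<le> e" by (cases E) auto
  have "AE x in M. ereal \<bar>f x\<bar> \<le> E" unfolding E_def by (rule esssup_AE)
  then have bound: "AE x in M. \<bar>f x\<bar> powr p \<le> e powr p"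
    by eventually_elim (use p Ee in \<open>auto intro!: powr_mono2\<close>)
  show int: "integrable M (\<lambda>x. \<bar>f x\<bar> powr p)"
    by (rule Bochner_Integration.integrable_bound[of _ "\<lambda>x. e powr p"]) (use bound in auto)
  have "expectation (\<lambda>x. \<bar>f x\<bar> powr p) \<le> e powr p"
    using integral_mono_AE[OF int _ bound] prob_space by simp
  then have "expectation (\<lambda>x. \<bar>f x\<bar> powr p) powr (1/p) \<le> (e powr p) powr (1/p)"
    using p by (intro powr_mono2) auto
  then show "expectation (\<lambda>x. \<bar>f x\<bar> powr p) powr (1/p) \<le> real_of_ereal E"
    using p e Ee by (simp add: powr_powr)
qed

lemma (in finite_measure) integral_abs_powr_le_bounded:
  fixes f :: "'a \<Rightarrow> real"
  assumes [measurable]: "f \<in> borel_measurable M" and bound: "\<And>x. x \<in> space M \<Longrightarrow> \<bar>f x\<bar> \<le> B"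
    and q: "1 \<le> q"
  shows "integral\<^sup>L M (\<lambda>x. \<bar>f x\<bar> powr q) \<le> B powr (q - 1) * integral\<^sup>L M (\<lambda>x. \<bar>f x\<bar>)"
proof -
  have "\<bar>f x\<bar> powr q \<le> B powr (q - 1) * \<bar>f x\<bar>" if "x \<in> space M" for x
  proof -
    have "\<bar>f x\<bar> powr q = \<bar>f x\<bar> powr ((q - 1) + 1)" by simp
    also have "\<dots> = \<bar>f x\<bar> powr (q - 1) * \<bar>f x\<bar> powr 1" by (rule powr_add)
    also have "\<dots> \<le> B powr (q - 1) * \<bar>f x\<bar>"
      using bound[OF that] q by (auto intro!: mult_right_mono powr_mono2)
    finally show ?thesis .
  qed
  then have "integral\<^sup>L M (\<lambda>x. \<bar>f x\<bar> powr q) \<le> integral\<^sup>L M (\<lambda>x. B powr (q - 1) * \<bar>f x\<bar>)"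
    using integrable_abs_powr_bounded[OF _ bound, where q=q]
      integrable_abs_powr_bounded[OF _ bound, where q=1] q
    by (intro integral_mono_AE) (auto intro: AE_I2)
  then show ?thesis by simp
qed

lemma (in prob_space) tendsto_Lp_norm_bounded:
  fixes f :: "'a \<Rightarrow> real"
  assumes [measurable]: "f \<in> borel_measurable M" and bound: "\<And>x. x \<in> space M \<Longrightarrow> \<bar>f x\<bar> \<le> B"
  shows "((\<lambda>q. expectation (\<lambda>x. \<bar>f x\<bar> powr q) powr (1/q)) \<longlongrightarrow> expectation (\<lambda>x. \<bar>f x\<bar>))
           (at_right 1)"
proof -
  define B' where "B' = max B 1"
  define a where "a = expectation (\<lambda>x. \<bar>f x\<bar>)"
  have "0 < B'" unfolding B'_def by simp
  have bound': "\<bar>f x\<bar> \<le> B'" if "x \<in> space M" for x using bound[OF that] unfolding B'_def by simp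
  have lower: "a \<le> expectation (\<lambda>x. \<bar>f x\<bar> powr q) powr (1/q)" if "1 < q" for q
    using Lp_norm_mono[of 1 q f] integrable_abs_powr_bounded[OF _ bound, where q=q] that
    by (simp add: a_def)
  have upper: "expectation (\<lambda>x. \<bar>f x\<bar> powr q) powr (1/q) \<le> (B' powr (q - 1) * a) powr (1/q)"
    if "1 < q" for q
    using integral_abs_powr_le_bounded[OF _ bound', where q=q] that unfolding a_def
    by (intro powr_mono2) auto
  have lim: "((\<lambda>q. (B' powr (q - 1) * a) powr (1/q)) \<longlongrightarrow> a) (at_right 1)"
  proof (cases "a = 0")
    case False
    then have "0 < a" unfolding a_def by (simp add: order_less_le)
    then have "((\<lambda>q. (B' powr (q - 1) * a) powr (1/q)) \<longlongrightarrow> (B' powr (1 - 1) * a) powr (1/1)) (at_right 1)"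
      using \<open>0 < B'\<close> by (intro tendsto_intros) auto
    then show ?thesis using \<open>0 < a\<close> \<open>0 < B'\<close> by simp
  qed simp
  have ev: "\<forall>\<^sub>F q in at_right (1::real). 1 < q" by (rule eventually_at_right_less)
  show ?thesis
    unfolding a_def[symmetric]
  proof (rule tendsto_sandwich[OF _ _ tendsto_const lim])
    show "\<forall>\<^sub>F q in at_right 1. a \<le> expectation (\<lambda>x. \<bar>f x\<bar> powr q) powr (1/q)"
      using ev by eventually_elim (rule lower)
    show "\<forall>\<^sub>F q in at_right 1.
        expectation (\<lambda>x. \<bar>f x\<bar> powr q) powr (1/q) \<le> (B' powr (q - 1) * a) powr (1/q)"
      using ev by eventually_elim (rule upper)
  qed
qed

section \<open>Gronwall's inequality\<close>

lemma integral_Icc_0_mono: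
  fixes a :: "real \<Rightarrow> real"
  assumes "a integrable_on {0..1}" "\<And>x. x \<in> {0..1} \<Longrightarrow> 0 \<le> a x" "0 \<le> x" "x \<le> y" "y \<le> 1"
  shows "integral {0..x} a \<le> integral {0..y} a"
  by (rule integral_subset_le) (use assms in \<open>auto intro: integrable_on_subinterval\<close>)

lemma absolutely_integrable_imp_integrable_on_Icc_0:
  fixes f :: "real \<Rightarrow> real"
  assumes "f absolutely_integrable_on {0..1}" "x \<in> {0..1}"
  shows "f integrable_on {0..x}"
  using integrable_on_subinterval[OF set_lebesgue_integral_eq_integral(1)[OF assms(1)]] assms(2)
  by auto

lemma absolutely_integrable_mult_continuous:
  fixes a g :: "real \<Rightarrow> real"
  assumes "a absolutely_integrable_on {0..1}" "continuous_on {0..1} g"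
  shows "(\<lambda>s. a s * g s) absolutely_integrable_on {0..1}"
proof -
  have "(\<lambda>s. g s * a s) absolutely_integrable_on {0..1}"
  proof (rule absolutely_integrable_bounded_measurable_product_real)
    show "g \<in> borel_measurable (lebesgue_on {0..1})"
      by (rule continuous_imp_measurable_on_sets_lebesgue[OF assms(2)]) simp
    show "bounded (g ` {0..1})"
      by (rule compact_imp_bounded, rule compact_continuous_image[OF assms(2)]) simp
  qed (use assms(1) in simp_all)
  then show ?thesis by (simp add: mult.commute)
qed

text \<open>On a piece [s,t] carrying at most 1/2 of the integral of a, the maximum of g absorbs its own
  contribution to the integral. Chaining such pieces replaces the exponential of Gronwall's
  inequality by a cruder constant, but avoids differentiating the indefinite integral of a, which is
  merely absolutely continuous.\<close>
lemma gronwall_step: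
  fixes a g :: "real \<Rightarrow> real"
  assumes aint: "a absolutely_integrable_on {0..1}" and a0: "\<And>x. x \<in> {0..1} \<Longrightarrow> 0 \<le> a x"
    and gc: "continuous_on {0..1} g" and g0: "\<And>x. x \<in> {0..1} \<Longrightarrow> 0 \<le> g x"
    and hyp: "\<And>t. t \<in> {0..1} \<Longrightarrow> g t \<le> c + integral {0..t} (\<lambda>s. a s * g s)"
    and st: "0 \<le> s" "s \<le> t" "t \<le> 1"
    and D: "\<And>x. x \<in> {0..s} \<Longrightarrow> g x \<le> D"
    and half: "integral {0..t} a - integral {0..s} a \<le> 1/2"
    and x: "x \<in> {s..t}"
  shows "g x \<le> 2 * c + 2 * (D * integral {0..s} a)"
proof -
  have ai: "a integrable_on {0..1}" using aint by (simp add: absolutely_integrable_on_def)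
  have agi: "(\<lambda>s. a s * g s) integrable_on {0..1}"
    using absolutely_integrable_mult_continuous[OF aint gc] by (simp add: absolutely_integrable_on_def)
  have "continuous_on {s..t} g" by (rule continuous_on_subset[OF gc]) (use st in auto)
  then obtain m where m: "m \<in> {s..t}" and max: "\<And>y. y \<in> {s..t} \<Longrightarrow> g y \<le> g m"
    using continuous_attains_sup[OF compact_Icc, of s t g] st by auto
  have "0 \<le> g m" using g0 m st by auto
  have sub: "f integrable_on {u..v}"
    if "f integrable_on {0..1}" "0 \<le> u" "v \<le> 1" for f :: "real \<Rightarrow> real" and u v
    using integrable_on_subinterval[OF that(1)] that by auto
  have half_m: "integral {s..m} a \<le> 1/2"
  proof -
    have "integral {0..s} a + integral {s..m} a = integral {0..m} a"
      using Henstock_Kurzweil_Integration.integral_combine[OF st(1) _ sub[OF ai]] m st by auto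
    moreover have "integral {0..m} a \<le> integral {0..t} a"
      using integral_Icc_0_mono[OF ai a0] st m by auto
    ultimately show ?thesis using half by linarith
  qed
  have "integral {0..m} (\<lambda>s. a s * g s)
      = integral {0..s} (\<lambda>s. a s * g s) + integral {s..m} (\<lambda>s. a s * g s)"
    using Henstock_Kurzweil_Integration.integral_combine[OF st(1) _ sub[OF agi]] m st by auto
  also have "\<dots> \<le> integral {0..s} (\<lambda>y. D * a y) + integral {s..m} (\<lambda>y. g m * a y)"
  proof (intro add_mono integral_le)
    show "a s' * g s' \<le> D * a s'" if "s' \<in> {0..s}" for s'
      using mult_left_mono[OF D[OF that] a0[of s']] that st by (simp add: mult.commute)
    show "a s' * g s' \<le> g m * a s'" if "s' \<in> {s..m}" for s'
      using mult_left_mono[OF max[of s'] a0[of s']] that st m by (simp add: mult.commute)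
  qed (use sub[OF ai] sub[OF agi] st m in \<open>auto intro!: integrable_on_mult_right\<close>)
  also have "\<dots> \<le> D * integral {0..s} a + g m / 2"
    using mult_left_mono[OF half_m \<open>0 \<le> g m\<close>] by simp
  finally have "g m \<le> 2 * c + 2 * (D * integral {0..s} a)"
    using hyp[of m] m st by auto
  then show ?thesis using max[OF x] by linarith
qed

fun gronwall_const :: "nat \<Rightarrow> real" where
  "gronwall_const 0 = 2"
| "gronwall_const (Suc n) = 2 + real (Suc n) * gronwall_const n"

lemma gronwall_const_ge_2: "2 \<le> gronwall_const n"
  by (induction n) (auto intro: add_increasing2)

lemma gronwall_const_mono: "gronwall_const n \<le> gronwall_const (Suc n)"
  using gronwall_const_ge_2[of n] by (simp add: distrib_right)

lemma gronwall_levels: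
  fixes a g :: "real \<Rightarrow> real"
  assumes aint: "a absolutely_integrable_on {0..1}" and a0: "\<And>x. x \<in> {0..1} \<Longrightarrow> 0 \<le> a x"
    and gc: "continuous_on {0..1} g" and g0: "\<And>x. x \<in> {0..1} \<Longrightarrow> 0 \<le> g x"
    and hyp: "\<And>t. t \<in> {0..1} \<Longrightarrow> g t \<le> c + integral {0..t} (\<lambda>s. a s * g s)"
    and c0: "0 \<le> c"
  shows "t \<in> {0..1} \<Longrightarrow> integral {0..t} a \<le> real n / 2 \<Longrightarrow> g t \<le> c * gronwall_const n"
proof (induction n arbitrary: t)
  case 0
  have "g t \<le> 2 * c + 2 * (c * integral {0..0} a)"
    using 0 hyp[of 0] by (intro gronwall_step[OF aint a0 gc g0 hyp]) auto
  then show ?case by (simp add: mult.commute)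
next
  case (Suc n)
  have ai: "a integrable_on {0..1}" using aint by (simp add: absolutely_integrable_on_def)
  show ?case
  proof (cases "integral {0..t} a \<le> real n / 2")
    case True
    then have "g t \<le> c * gronwall_const n" using Suc by blast
    also have "\<dots> \<le> c * gronwall_const (Suc n)" by (intro mult_left_mono gronwall_const_mono c0)
    finally show ?thesis .
  next
    case False
    have "continuous_on {0..t} (\<lambda>x. integral {0..x} a)"
      using Suc.prems by (intro indefinite_integral_continuous_1 integrable_on_subinterval[OF ai]) auto
    then obtain s where s: "0 \<le> s" "s \<le> t" "integral {0..s} a = real n / 2"
      using IVT'[of "\<lambda>x. integral {0..x} a" 0 "real n / 2" t] False Suc.prems by auto
    have D: "g x \<le> c * gronwall_const n" if "x \<in> {0..s}" for x
      using Suc.IH[of x] integral_Icc_0_mono[OF ai a0, of x s] that s Suc.prems by auto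
    have "g t \<le> 2 * c + 2 * ((c * gronwall_const n) * integral {0..s} a)"
      by (rule gronwall_step[OF aint a0 gc g0 hyp _ _ _ D, where t=t]) (use s Suc.prems in auto)
    also have "\<dots> = 2 * c + 2 * ((c * gronwall_const n) * (real n / 2))" using s(3) by simp
    also have "\<dots> \<le> c * gronwall_const (Suc n)"
      using c0 gronwall_const_ge_2[of n] by (simp add: algebra_simps)
    finally show ?thesis .
  qed
qed

definition gronwall_bound :: "real \<Rightarrow> real" where
  "gronwall_bound B = gronwall_const (nat \<lceil>2 * B\<rceil>)"

lemma gronwall_bound_pos: "0 < gronwall_bound B"
  unfolding gronwall_bound_def using gronwall_const_ge_2[of "nat \<lceil>2 * B\<rceil>"] by linarith

lemma gronwall:
  fixes a g :: "real \<Rightarrow> real"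
  assumes aint: "a absolutely_integrable_on {0..1}" and a0: "\<And>x. x \<in> {0..1} \<Longrightarrow> 0 \<le> a x"
    and gc: "continuous_on {0..1} g" and g0: "\<And>x. x \<in> {0..1} \<Longrightarrow> 0 \<le> g x"
    and hyp: "\<And>t. t \<in> {0..1} \<Longrightarrow> g t \<le> c + integral {0..t} (\<lambda>s. a s * g s)"
    and c0: "0 \<le> c" and B: "integral {0..1} a \<le> B" and t: "t \<in> {0..1}"
  shows "g t \<le> c * gronwall_bound B"
proof -
  have ai: "a integrable_on {0..1}" using aint by (simp add: absolutely_integrable_on_def)
  have "integral {0..t} a \<le> integral {0..1} a" using integral_Icc_0_mono[OF ai a0] t by auto
  also have "\<dots> \<le> real (nat \<lceil>2 * B\<rceil>) / 2" using B by linarith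
  finally show ?thesis
    using gronwall_levels[OF aint a0 gc g0 hyp c0 t] unfolding gronwall_bound_def by blast
qed

section \<open>The initial value problem\<close>

definition is_sol_deriv :: "(real \<Rightarrow> real) \<Rightarrow> (real \<Rightarrow> real) \<Rightarrow> (real \<Rightarrow> real) \<Rightarrow> bool" where
  "is_sol_deriv V y z \<longleftrightarrow> continuous_on {0..1} y \<and> continuous_on {0..1} z \<and>
     y 0 = 0 \<and> z 0 = 1 \<and>
     (\<lambda>s. V s * y s) absolutely_integrable_on {0..1} \<and>
     (\<forall>t\<in>{0..1}. (z has_integral (y t - y 0)) {0..t}) \<and>
     (\<forall>t\<in>{0..1}. ((\<lambda>s. V s * y s) has_integral (z t - z 0)) {0..t})"

lemma is_sol_iff_is_sol_deriv: "is_sol V y \<longleftrightarrow> (\<exists>z. is_sol_deriv V y z)"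
  unfolding is_sol_def is_sol_deriv_def by simp

lemma bounded_measurable_absolutely_integrable:
  fixes W :: "real \<Rightarrow> real"
  assumes "W \<in> borel_measurable I01" "\<And>x. x \<in> {0..1} \<Longrightarrow> \<bar>W x\<bar> \<le> N"
  shows "W absolutely_integrable_on {0..1}"
  by (rule measurable_bounded_by_integrable_imp_absolutely_integrable[of _ _ "\<lambda>_. N"])
     (use assms in auto)

lemma gronwall_system:
  fixes d e V :: "real \<Rightarrow> real"
  assumes dc: "continuous_on {0..1} d" and ec: "continuous_on {0..1} e"
    and de: "\<And>t. t \<in> {0..1} \<Longrightarrow> (e has_integral d t) {0..t}"
    and eb: "\<And>t. t \<in> {0..1} \<Longrightarrow> \<bar>e t\<bar> \<le> c + integral {0..t} (\<lambda>s. \<bar>V s\<bar> * \<bar>d s\<bar>)"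
    and Vi: "V absolutely_integrable_on {0..1}" and VB: "integral {0..1} (\<lambda>x. \<bar>V x\<bar>) \<le> B"
    and c0: "0 \<le> c" and t: "t \<in> {0..1}"
  shows "\<bar>d t\<bar> + \<bar>e t\<bar> \<le> c * gronwall_bound (B + 1)"
proof -
  define a where "a = (\<lambda>x. 1 + \<bar>V x\<bar>)"
  define g where "g = (\<lambda>x. \<bar>d x\<bar> + \<bar>e x\<bar>)"
  have Va: "(\<lambda>x. \<bar>V x\<bar>) absolutely_integrable_on {0..1}" using Vi by (rule set_integrable_abs)
  have one: "(\<lambda>x. 1::real) absolutely_integrable_on {0..1::real}"
    by (intro absolutely_integrable_continuous_real continuous_intros)
  have ai: "a absolutely_integrable_on {0..1}"
    unfolding a_def by (rule set_integral_add(1)[OF one Va])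
  have gc: "continuous_on {0..1} g" unfolding g_def by (intro continuous_intros dc ec)
  have hyp: "g x \<le> c + integral {0..x} (\<lambda>s. a s * g s)" if x: "x \<in> {0..1}" for x
  proof -
    have aex: "(\<lambda>x. \<bar>e x\<bar>) integrable_on {0..x}"
      using x
      by (intro integrable_continuous_interval continuous_intros continuous_on_subset[OF ec]) auto
    have vdx: "(\<lambda>s. \<bar>V s\<bar> * \<bar>d s\<bar>) integrable_on {0..x}"
      using x by (intro absolutely_integrable_imp_integrable_on_Icc_0
          absolutely_integrable_mult_continuous Va continuous_intros dc)
    have "\<bar>d x\<bar> \<le> integral {0..x} (\<lambda>x. \<bar>e x\<bar>)"
      using integral_norm_bound_integral[OF has_integral_integrable[OF de[OF x]] aex] de[OF x]
      by (simp add: integral_unique)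
    moreover have "integral {0..x} (\<lambda>x. \<bar>e x\<bar>) + integral {0..x} (\<lambda>s. \<bar>V s\<bar> * \<bar>d s\<bar>)
        \<le> integral {0..x} (\<lambda>s. a s * g s)"
      unfolding integral_add[OF aex vdx, symmetric]
      using x by (intro integral_le integrable_add aex vdx absolutely_integrable_imp_integrable_on_Icc_0
          absolutely_integrable_mult_continuous ai gc)
         (auto simp: a_def g_def algebra_simps)
    ultimately show ?thesis using eb[OF x] unfolding g_def by linarith
  qed
  have "integral {0..1} a = 1 + integral {0..1} (\<lambda>x. \<bar>V x\<bar>)"
    unfolding a_def
    using integral_add[OF absolutely_integrable_imp_integrable_on_Icc_0[OF one]
        absolutely_integrable_imp_integrable_on_Icc_0[OF Va], of 1]
    by simp
  then have "integral {0..1} a \<le> B + 1" using VB by simp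
  then show ?thesis
    using gronwall[OF ai _ gc _ hyp c0 _ t] unfolding a_def g_def by auto
qed

lemma is_sol_deriv_abs_le:
  assumes sol: "is_sol_deriv V y z" and Vi: "V absolutely_integrable_on {0..1}"
    and VB: "integral {0..1} (\<lambda>x. \<bar>V x\<bar>) \<le> B" and t: "t \<in> {0..1}"
  shows "\<bar>y t\<bar> \<le> gronwall_bound (B + 1)"
proof -
  have yc: "continuous_on {0..1} y" and zc: "continuous_on {0..1} z" and y0: "y 0 = 0"
    and z0: "z 0 = 1" and Vy: "(\<lambda>s. V s * y s) absolutely_integrable_on {0..1}"
    and zy: "\<And>t. t \<in> {0..1} \<Longrightarrow> (z has_integral (y t - y 0)) {0..t}"
    and vy: "\<And>t. t \<in> {0..1} \<Longrightarrow> ((\<lambda>s. V s * y s) has_integral (z t - z 0)) {0..t}"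
    using sol unfolding is_sol_deriv_def by auto
  have "\<bar>z x\<bar> \<le> 1 + integral {0..x} (\<lambda>s. \<bar>V s\<bar> * \<bar>y s\<bar>)" if x: "x \<in> {0..1}" for x
  proof -
    have "(\<lambda>s. \<bar>V s * y s\<bar>) integrable_on {0..x}"
      using x by (intro absolutely_integrable_imp_integrable_on_Icc_0 set_integrable_abs Vy)
    then have "norm (integral {0..x} (\<lambda>s. V s * y s)) \<le> integral {0..x} (\<lambda>s. \<bar>V s\<bar> * \<bar>y s\<bar>)"
      using vy[OF x] by (intro integral_norm_bound_integral) (auto simp: abs_mult)
    then show ?thesis using vy[OF x] z0 by (simp add: integral_unique)
  qed
  then have "\<bar>y t\<bar> + \<bar>z t\<bar> \<le> 1 * gronwall_bound (B + 1)"
    using zy y0 by (intro gronwall_system[OF yc zc _ _ Vi VB _ t]) auto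
  then show ?thesis by simp
qed

lemma abs_integral_mult_diff_le:
  fixes V W y w :: "real \<Rightarrow> real"
  assumes Vi: "V absolutely_integrable_on {0..1}" and Wi: "W absolutely_integrable_on {0..1}"
    and yc: "continuous_on {0..1} y" and wc: "continuous_on {0..1} w"
    and wK: "\<And>s. s \<in> {0..1} \<Longrightarrow> \<bar>w s\<bar> \<le> K" and x: "x \<in> {0..1}"
  shows "\<bar>integral {0..x} (\<lambda>s. V s * y s - W s * w s)\<bar>
    \<le> integral {0..x} (\<lambda>s. \<bar>V s\<bar> * \<bar>y s - w s\<bar>) + K * integral {0..1} (\<lambda>s. \<bar>V s - W s\<bar>)"
proof -
  have VWi: "(\<lambda>x. \<bar>V x - W x\<bar>) absolutely_integrable_on {0..1}"
    by (intro set_integrable_abs set_integral_diff(1) Vi Wi)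
  have i1: "(\<lambda>s. \<bar>V s\<bar> * \<bar>y s - w s\<bar>) integrable_on {0..x}"
    using x by (intro absolutely_integrable_imp_integrable_on_Icc_0 absolutely_integrable_mult_continuous
        set_integrable_abs Vi continuous_intros yc wc)
  have i2: "(\<lambda>s. \<bar>V s - W s\<bar> * K) integrable_on {0..x}"
    by (intro integrable_on_mult_left absolutely_integrable_imp_integrable_on_Icc_0[OF VWi x])
  have "\<bar>V s * y s - W s * w s\<bar> \<le> \<bar>V s\<bar> * \<bar>y s - w s\<bar> + \<bar>V s - W s\<bar> * K"
    if "s \<in> {0..x}" for s
  proof -
    have "V s * y s - W s * w s = V s * (y s - w s) + (V s - W s) * w s" by (simp add: algebra_simps)
    then have "\<bar>V s * y s - W s * w s\<bar> \<le> \<bar>V s\<bar> * \<bar>y s - w s\<bar> + \<bar>V s - W s\<bar> * \<bar>w s\<bar>"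
      by (simp add: abs_mult[symmetric] abs_triangle_ineq)
    also have "\<dots> \<le> \<bar>V s\<bar> * \<bar>y s - w s\<bar> + \<bar>V s - W s\<bar> * K"
      using wK[of s] that x by (simp add: mult_left_mono)
    finally show ?thesis .
  qed
  moreover have "(\<lambda>s. V s * y s - W s * w s) integrable_on {0..x}"
    using x by (intro integrable_diff absolutely_integrable_imp_integrable_on_Icc_0
        absolutely_integrable_mult_continuous Vi Wi yc wc)
  ultimately have "norm (integral {0..x} (\<lambda>s. V s * y s - W s * w s))
      \<le> integral {0..x} (\<lambda>s. \<bar>V s\<bar> * \<bar>y s - w s\<bar> + \<bar>V s - W s\<bar> * K)"
    by (intro integral_norm_bound_integral integrable_add i1 i2) auto
  also have "\<dots> = integral {0..x} (\<lambda>s. \<bar>V s\<bar> * \<bar>y s - w s\<bar>) + integral {0..x} (\<lambda>s. \<bar>V s - W s\<bar>) * K"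
    using integral_add[OF i1 i2] by simp
  also have "integral {0..x} (\<lambda>s. \<bar>V s - W s\<bar>) * K \<le> K * integral {0..1} (\<lambda>s. \<bar>V s - W s\<bar>)"
    using integral_Icc_0_mono[OF absolutely_integrable_imp_integrable_on_Icc_0[OF VWi], of x 1] x
      wK[OF x] by (simp add: mult.commute mult_left_mono)
  finally show ?thesis by simp
qed

lemma is_sol_deriv_dist_le:
  assumes sol_V: "is_sol_deriv V y z" and sol_W: "is_sol_deriv W w r"
    and Vi: "V absolutely_integrable_on {0..1}" and Wi: "W absolutely_integrable_on {0..1}"
    and VB: "integral {0..1} (\<lambda>x. \<bar>V x\<bar>) \<le> B"
    and wK: "\<And>t. t \<in> {0..1} \<Longrightarrow> \<bar>w t\<bar> \<le> K" and t: "t \<in> {0..1}"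
  shows "\<bar>y t - w t\<bar> \<le> K * integral {0..1} (\<lambda>x. \<bar>V x - W x\<bar>) * gronwall_bound (B + 1)"
proof -
  have yc: "continuous_on {0..1} y" and zc: "continuous_on {0..1} z" and y0: "y 0 = 0"
    and z0: "z 0 = 1"
    and zy: "\<And>t. t \<in> {0..1} \<Longrightarrow> (z has_integral (y t - y 0)) {0..t}"
    and vy: "\<And>t. t \<in> {0..1} \<Longrightarrow> ((\<lambda>s. V s * y s) has_integral (z t - z 0)) {0..t}"
    using sol_V unfolding is_sol_deriv_def by auto
  have wc: "continuous_on {0..1} w" and rc: "continuous_on {0..1} r" and w0: "w 0 = 0"
    and r0: "r 0 = 1"
    and rw: "\<And>t. t \<in> {0..1} \<Longrightarrow> (r has_integral (w t - w 0)) {0..t}"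
    and ww: "\<And>t. t \<in> {0..1} \<Longrightarrow> ((\<lambda>s. W s * w s) has_integral (r t - r 0)) {0..t}"
    using sol_W unfolding is_sol_deriv_def by auto
  define \<delta> where "\<delta> = integral {0..1} (\<lambda>x. \<bar>V x - W x\<bar>)"
  have "0 \<le> K" using wK[of 0] by auto
  have "0 \<le> \<delta>" unfolding \<delta>_def
    by (intro integral_nonneg absolutely_integrable_imp_integrable_on_Icc_0[of _ 1, simplified]
        set_integrable_abs set_integral_diff(1) Vi Wi) auto
  have "\<bar>y t - w t\<bar> + \<bar>z t - r t\<bar> \<le> K * \<delta> * gronwall_bound (B + 1)"
  proof (rule gronwall_system[OF _ _ _ _ Vi VB _ t])
    show "((\<lambda>x. z x - r x) has_integral (y x - w x)) {0..x}" if "x \<in> {0..1}" for x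
      using has_integral_diff[OF zy[OF that] rw[OF that]] y0 w0 by simp
    show "\<bar>z x - r x\<bar> \<le> K * \<delta> + integral {0..x} (\<lambda>s. \<bar>V s\<bar> * \<bar>y s - w s\<bar>)"
      if "x \<in> {0..1}" for x
      using abs_integral_mult_diff_le[OF Vi Wi yc wc wK that]
        has_integral_diff[OF vy[OF that] ww[OF that]] z0 r0
      unfolding \<delta>_def by (simp add: integral_unique add.commute)
  qed (use \<open>0 \<le> K\<close> \<open>0 \<le> \<delta>\<close> in \<open>auto intro!: continuous_intros yc wc zc rc\<close>)
  then show ?thesis unfolding \<delta>_def by simp
qed

lemma has_integral_cmult_power:
  fixes t C :: real
  assumes "0 \<le> t"
  shows "((\<lambda>s. C * s ^ k) has_integral C * t ^ (k + 1) / (k + 1)) {0..t}"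
proof -
  have "((\<lambda>s. C * s ^ k) has_integral C * t ^ (k + 1) / (k + 1) - C * 0 ^ (k + 1) / (k + 1)) {0..t}"
  proof (rule fundamental_theorem_of_calculus[OF assms])
    fix x assume "x \<in> {0..t}"
    have "((\<lambda>s. C * s ^ (k + 1) / (k + 1)) has_real_derivative C * (real (k + 1) * x ^ k) / (k + 1))
        (at x within {0..t})"
      using DERIV_pow[of "k + 1" x "{0..t}"] by (intro DERIV_cdivide DERIV_cmult) simp
    then show "((\<lambda>s. C * s ^ (k + 1) / (k + 1)) has_vector_derivative C * x ^ k) (at x within {0..t})"
      by (simp add: has_real_derivative_iff_has_vector_derivative[symmetric] del: of_nat_Suc)
  qed
  then show ?thesis by simp
qed

lemma abs_integral_le_cmult_power:
  fixes f :: "real \<Rightarrow> real"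
  assumes "f integrable_on {0..t}" "0 \<le> t" "\<And>s. s \<in> {0..t} \<Longrightarrow> \<bar>f s\<bar> \<le> C * s ^ k"
  shows "\<bar>integral {0..t} f\<bar> \<le> C * t ^ (k + 1) / (k + 1)"
proof -
  have "norm (integral {0..t} f) \<le> integral {0..t} (\<lambda>s. C * s ^ k)"
    using has_integral_cmult_power[OF assms(2)] assms by (intro integral_norm_bound_integral) auto
  also have "\<dots> = C * t ^ (k + 1) / (k + 1)"
    using has_integral_cmult_power[OF assms(2)] by (rule integral_unique)
  finally show ?thesis by simp
qed

lemma tendsto_integral_mult_uniform_limit:
  fixes W g :: "real \<Rightarrow> real" and f :: "nat \<Rightarrow> real \<Rightarrow> real"
  assumes lim: "uniform_limit {0..t} f g sequentially"
    and fi: "\<And>n. (\<lambda>s. W s * f n s) integrable_on {0..t}" and gi: "(\<lambda>s. W s * g s) integrable_on {0..t}"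
    and Wb: "\<And>s. s \<in> {0..t} \<Longrightarrow> \<bar>W s\<bar> \<le> N" and t: "0 \<le> t"
  shows "(\<lambda>n. integral {0..t} (\<lambda>s. W s * f n s)) \<longlonglongrightarrow> integral {0..t} (\<lambda>s. W s * g s)"
proof (rule tendstoI)
  fix e :: real assume "0 < e"
  have "0 \<le> N" using Wb[of 0] t by auto
  define \<epsilon> where "\<epsilon> = e / ((N + 1) * (t + 1))"
  have "0 < \<epsilon>" unfolding \<epsilon>_def using \<open>0 < e\<close> \<open>0 \<le> N\<close> t by simp
  have "N * \<epsilon> * t < e"
  proof -
    have "N * t < (N + 1) * (t + 1)" using \<open>0 \<le> N\<close> t by (simp add: algebra_simps)
    then have r: "N * t / ((N + 1) * (t + 1)) < 1" using \<open>0 \<le> N\<close> t by (simp add: divide_less_eq)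
    have "N * \<epsilon> * t = e * (N * t / ((N + 1) * (t + 1)))" unfolding \<epsilon>_def by simp
    also have "\<dots> < e * 1" by (rule mult_strict_left_mono[OF r \<open>0 < e\<close>])
    finally show ?thesis by simp
  qed
  show "\<forall>\<^sub>F n in sequentially.
      dist (integral {0..t} (\<lambda>s. W s * f n s)) (integral {0..t} (\<lambda>s. W s * g s)) < e"
    using uniform_limitD[OF lim \<open>0 < \<epsilon>\<close>]
  proof eventually_elim
    case (elim n)
    have "dist (integral {0..t} (\<lambda>s. W s * f n s)) (integral {0..t} (\<lambda>s. W s * g s))
        = norm (integral {0..t} (\<lambda>s. W s * f n s - W s * g s))"
      by (simp add: dist_norm integral_diff[OF fi gi])
    also have "\<dots> \<le> integral {0..t} (\<lambda>s. N * \<epsilon>)"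
    proof (intro integral_norm_bound_integral integrable_diff fi gi integrable_const_ivl)
      fix s assume s: "s \<in> {0..t}"
      have "norm (W s * f n s - W s * g s) = \<bar>W s\<bar> * dist (f n s) (g s)"
        by (simp add: dist_real_def abs_mult[symmetric] right_diff_distrib)
      also have "\<dots> \<le> N * \<epsilon>"
        using elim s Wb[OF s] \<open>0 < \<epsilon>\<close> by (intro mult_mono) (auto intro: less_imp_le)
      finally show "norm (W s * f n s - W s * g s) \<le> N * \<epsilon>" .
    qed
    also have "\<dots> = N * \<epsilon> * t" using t by simp
    finally show ?case using \<open>N * \<epsilon> * t < e\<close> by linarith
  qed
qed

text \<open>Picard iteration for the system: picard_term W n is the n-th term of the series for y' = z,
  and its indefinite integral the n-th term of the series for y.\<close>
primrec picard_term :: "(real \<Rightarrow> real) \<Rightarrow> nat \<Rightarrow> real \<Rightarrow> real" where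
  "picard_term W 0 = (\<lambda>t. 1)"
| "picard_term W (Suc n) = (\<lambda>t. integral {0..t} (\<lambda>r. W r * integral {0..r} (picard_term W n)))"

lemma picard_term_continuous_bound:
  assumes Wm: "W \<in> borel_measurable I01" and Wb: "\<And>x. x \<in> {0..1} \<Longrightarrow> \<bar>W x\<bar> \<le> N"
  shows "continuous_on {0..1} (picard_term W n) \<and>
    (\<forall>t\<in>{0..1}. \<bar>picard_term W n t\<bar> \<le> N ^ n / fact n * t ^ n)"
proof (induction n)
  case 0
  show ?case by simp
next
  case (Suc n)
  have "0 \<le> N" using Wb[of 0] by auto
  define u where "u = (\<lambda>r. integral {0..r} (picard_term W n))"
  have qi: "picard_term W n integrable_on {0..1}"
    using Suc.IH by (intro integrable_continuous_interval) auto
  have ub: "\<bar>u r\<bar> \<le> N ^ n / fact n * r ^ (n + 1) / (n + 1)" if r: "r \<in> {0..1}" for r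
    unfolding u_def
    using Suc.IH r by (intro abs_integral_le_cmult_power integrable_on_subinterval[OF qi]) auto
  have uc: "continuous_on {0..1} u" unfolding u_def by (rule indefinite_integral_continuous_1[OF qi])
  have Wu: "(\<lambda>r. W r * u r) integrable_on {0..1}"
    using absolutely_integrable_mult_continuous[OF bounded_measurable_absolutely_integrable[OF Wm Wb] uc]
    by (simp add: absolutely_integrable_on_def)
  have eq: "picard_term W (Suc n) = (\<lambda>t. integral {0..t} (\<lambda>r. W r * u r))" by (simp add: u_def)
  have "\<bar>picard_term W (Suc n) t\<bar> \<le> N ^ Suc n / fact (Suc n) * t ^ Suc n" if t: "t \<in> {0..1}" for t
  proof -
    have "\<bar>W s * u s\<bar> \<le> N ^ Suc n / fact (Suc n) * s ^ (n + 1)" if s: "s \<in> {0..t}" for s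
    proof -
      have "\<bar>W s * u s\<bar> \<le> N * (N ^ n / fact n * s ^ (n + 1) / (n + 1))"
        unfolding abs_mult using Wb[of s] ub[of s] s t by (intro mult_mono) auto
      also have "\<dots> = N ^ Suc n / fact (Suc n) * s ^ (n + 1)" by (simp add: field_simps)
      finally show ?thesis .
    qed
    then have "\<bar>picard_term W (Suc n) t\<bar> \<le> N ^ Suc n / fact (Suc n) * t ^ (n + 1 + 1) / (n + 1 + 1)"
      unfolding eq using t by (intro abs_integral_le_cmult_power integrable_on_subinterval[OF Wu]) auto
    also have "\<dots> \<le> N ^ Suc n / fact (Suc n) * t ^ Suc n"
    proof -
      have "t ^ (n + 1 + 1) \<le> t ^ (n + 1)" using t by (intro power_decreasing) auto
      also have "\<dots> \<le> t ^ (n + 1) * (n + 1 + 1)"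
        using mult_left_mono[of 1 "real (n + 1 + 1)" "t ^ (n + 1)"] t by simp
      finally have "t ^ (n + 1 + 1) / (n + 1 + 1) \<le> t ^ Suc n" by (simp add: divide_le_eq)
      then have "N ^ Suc n / fact (Suc n) * (t ^ (n + 1 + 1) / (n + 1 + 1))
          \<le> N ^ Suc n / fact (Suc n) * t ^ Suc n"
        using \<open>0 \<le> N\<close> by (intro mult_left_mono) auto
      then show ?thesis by simp
    qed
    finally show ?thesis .
  qed
  then show ?case unfolding eq by (auto intro: indefinite_integral_continuous_1[OF Wu])
qed

lemma abs_picard_term_le:
  assumes Wm: "W \<in> borel_measurable I01" and Wb: "\<And>x. x \<in> {0..1} \<Longrightarrow> \<bar>W x\<bar> \<le> N"
    and t: "t \<in> {0..1}"
  shows "\<bar>picard_term W n t\<bar> \<le> N ^ n / fact n"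
proof -
  have "0 \<le> N" using Wb[of 0] by auto
  have "\<bar>picard_term W n t\<bar> \<le> N ^ n / fact n * t ^ n"
    using picard_term_continuous_bound[OF Wm Wb] t by blast
  also have "\<dots> \<le> N ^ n / fact n * 1"
    using t \<open>0 \<le> N\<close> by (intro mult_left_mono) (auto simp: power_le_one)
  finally show ?thesis by simp
qed

lemma abs_integral_picard_term_le:
  assumes Wm: "W \<in> borel_measurable I01" and Wb: "\<And>x. x \<in> {0..1} \<Longrightarrow> \<bar>W x\<bar> \<le> N"
    and t: "t \<in> {0..1}"
  shows "\<bar>integral {0..t} (picard_term W n)\<bar> \<le> N ^ n / fact n"
proof -
  have "0 \<le> N" using Wb[of 0] by auto
  have "continuous_on {0..1} (picard_term W n)"
    using picard_term_continuous_bound[OF Wm Wb] by blast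
  then have "picard_term W n integrable_on {0..t}"
    using t by (intro integrable_continuous_interval) (auto elim: continuous_on_subset)
  moreover have "norm (picard_term W n s) \<le> N ^ n / fact n" if "s \<in> {0..t}" for s
    using abs_picard_term_le[OF Wm Wb, of s n] that t by simp
  ultimately have "norm (integral {0..t} (picard_term W n)) \<le> integral {0..t} (\<lambda>s. N ^ n / fact n)"
    by (intro integral_norm_bound_integral integrable_const_ivl)
  also have "\<dots> = N ^ n / fact n * t" using t by simp
  also have "\<dots> \<le> N ^ n / fact n"
    using t \<open>0 \<le> N\<close> mult_left_mono[of t 1 "N ^ n / fact n"] by simp
  finally show ?thesis by simp
qed

lemma has_integral_mult_uniform_limit_sum:
  fixes W g :: "real \<Rightarrow> real" and f :: "nat \<Rightarrow> real \<Rightarrow> real"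
  assumes lim: "uniform_limit {0..t} (\<lambda>n x. \<Sum>i<n. f i x) g sequentially"
    and fi: "\<And>i. ((\<lambda>s. W s * f i s) has_integral F i) {0..t}"
    and gi: "(\<lambda>s. W s * g s) integrable_on {0..t}"
    and F: "(\<lambda>n. \<Sum>i<n. F i) \<longlonglongrightarrow> L"
    and Wb: "\<And>s. s \<in> {0..t} \<Longrightarrow> \<bar>W s\<bar> \<le> N" and t: "0 \<le> t"
  shows "((\<lambda>s. W s * g s) has_integral L) {0..t}"
proof -
  have sums: "((\<lambda>s. W s * (\<Sum>i<n. f i s)) has_integral (\<Sum>i<n. F i)) {0..t}" for n
    using has_integral_sum[of "{..<n}" "\<lambda>i s. W s * f i s" F] fi by (simp add: sum_distrib_left)
  have "(\<lambda>n. integral {0..t} (\<lambda>s. W s * (\<Sum>i<n. f i s))) \<longlonglongrightarrow> integral {0..t} (\<lambda>s. W s * g s)"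
    using has_integral_integrable[OF sums]
    by (rule tendsto_integral_mult_uniform_limit[OF lim _ gi Wb t])
  then have "(\<lambda>n. \<Sum>i<n. F i) \<longlonglongrightarrow> integral {0..t} (\<lambda>s. W s * g s)"
    by (simp add: integral_unique[OF sums])
  then have "integral {0..t} (\<lambda>s. W s * g s) = L" using F by (rule LIMSEQ_unique)
  then show ?thesis using integrable_integral[OF gi] by simp
qed

lemma exists_is_sol_deriv_bounded:
  assumes Wm: "W \<in> borel_measurable I01" and Wb: "\<And>x. x \<in> {0..1} \<Longrightarrow> \<bar>W x\<bar> \<le> N"
  shows "\<exists>y z. is_sol_deriv W y z"
proof -
  define q where "q = picard_term W"
  define u where "u = (\<lambda>n t. integral {0..t} (q n))"
  have qc: "continuous_on {0..1} (q n)" for n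
    using picard_term_continuous_bound[OF Wm Wb] unfolding q_def by blast
  have uc: "continuous_on {0..1} (u n)" for n
    unfolding u_def by (intro indefinite_integral_continuous_1 integrable_continuous_interval qc)
  have summable: "summable (\<lambda>n. N ^ n / fact n)"
    using summable_exp[of N] by (simp add: field_simps)
  define y where "y = (\<lambda>t. \<Sum>n. u n t)"
  define z where "z = (\<lambda>t. \<Sum>n. q n t)"
  have uly: "uniform_limit {0..1} (\<lambda>n x. \<Sum>i<n. u i x) y sequentially"
    unfolding y_def u_def q_def
    by (rule Weierstrass_m_test[OF _ summable]) (use abs_integral_picard_term_le[OF Wm Wb] in auto)
  have ulz: "uniform_limit {0..1} (\<lambda>n x. \<Sum>i<n. q i x) z sequentially"
    unfolding z_def q_def
    by (rule Weierstrass_m_test[OF _ summable]) (use abs_picard_term_le[OF Wm Wb] in auto)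
  have yc: "continuous_on {0..1} y"
    by (rule uniform_limit_theorem[OF _ uly]) (auto intro!: always_eventually continuous_on_sum uc)
  have zc: "continuous_on {0..1} z"
    by (rule uniform_limit_theorem[OF _ ulz]) (auto intro!: always_eventually continuous_on_sum qc)
  have y0: "y 0 = 0" unfolding y_def u_def by simp
  have "q n 0 = (if n = 0 then 1 else 0)" for n by (cases n) (auto simp: q_def)
  then have z0: "z 0 = 1"
    unfolding z_def using sums_single[of 0 "\<lambda>_. 1::real"] sums_unique by fastforce
  have Wi: "W absolutely_integrable_on {0..1}"
    by (rule bounded_measurable_absolutely_integrable[OF Wm Wb])
  have Wy: "(\<lambda>s. W s * y s) absolutely_integrable_on {0..1}"
    by (rule absolutely_integrable_mult_continuous[OF Wi yc])
  have "(z has_integral (y t - y 0)) {0..t}" if t: "t \<in> {0..1}" for t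
  proof -
    have "((\<lambda>s. 1 * z s) has_integral y t) {0..t}"
    proof (rule has_integral_mult_uniform_limit_sum[where N=1])
      show "uniform_limit {0..t} (\<lambda>n x. \<Sum>i<n. q i x) z sequentially"
        by (rule uniform_limit_on_subset[OF ulz]) (use t in auto)
      show "((\<lambda>s. 1 * q i s) has_integral u i t) {0..t}" for i
        unfolding u_def using t
        by (auto intro!: integrable_integral integrable_continuous_interval continuous_on_subset[OF qc])
      show "(\<lambda>s. 1 * z s) integrable_on {0..t}"
        using t by (auto intro!: integrable_continuous_interval continuous_on_subset[OF zc])
      show "(\<lambda>n. \<Sum>i<n. u i t) \<longlonglongrightarrow> y t" by (rule tendsto_uniform_limitI[OF uly t])
    qed (use t in auto)
    then show ?thesis using y0 by simp
  qed
  moreover have "((\<lambda>s. W s * y s) has_integral (z t - z 0)) {0..t}" if t: "t \<in> {0..1}" for t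
  proof (rule has_integral_mult_uniform_limit_sum[where N=N])
    show "uniform_limit {0..t} (\<lambda>n x. \<Sum>i<n. u i x) y sequentially"
      by (rule uniform_limit_on_subset[OF uly]) (use t in auto)
    show "((\<lambda>s. W s * u i s) has_integral q (Suc i) t) {0..t}" for i
    proof -
      have "(\<lambda>s. W s * u i s) integrable_on {0..t}"
        by (rule absolutely_integrable_imp_integrable_on_Icc_0[OF
              absolutely_integrable_mult_continuous[OF Wi uc] t])
      moreover have "q (Suc i) t = integral {0..t} (\<lambda>s. W s * u i s)" by (simp add: q_def u_def)
      ultimately show ?thesis using integrable_integral by simp
    qed
    show "(\<lambda>s. W s * y s) integrable_on {0..t}"
      by (rule absolutely_integrable_imp_integrable_on_Icc_0[OF Wy t])
    have "(\<lambda>n. \<Sum>i<Suc n. q i t) \<longlonglongrightarrow> z t"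
      using tendsto_uniform_limitI[OF ulz t] by (rule LIMSEQ_Suc)
    moreover have "(\<Sum>i<Suc n. q i t) = 1 + (\<Sum>i<n. q (Suc i) t)" for n
      by (subst sum.lessThan_Suc_shift) (simp add: q_def)
    ultimately have "(\<lambda>n. 1 + (\<Sum>i<n. q (Suc i) t)) \<longlonglongrightarrow> z t" by simp
    then have "(\<lambda>n. (1 + (\<Sum>i<n. q (Suc i) t)) - 1) \<longlonglongrightarrow> z t - 1"
      by (intro tendsto_diff tendsto_const)
    then show "(\<lambda>n. \<Sum>i<n. q (Suc i) t) \<longlonglongrightarrow> z t - z 0" using z0 by simp
  qed (use t Wb in auto)
  ultimately have "is_sol_deriv W y z"
    unfolding is_sol_deriv_def using yc zc y0 z0 Wy by blast
  then show ?thesis by blast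
qed

section \<open>The values v_q\<close>

interpretation I01: prob_space I01
proof
  have "emeasure I01 {0..1} = emeasure lebesgue {0..1::real}"
    by (rule emeasure_restrict_space) auto
  then show "emeasure I01 (space I01) = 1" by simp
qed

lemma in_Lq_1_iff: "in_Lq 1 V \<longleftrightarrow> V absolutely_integrable_on {0..1}"
  unfolding in_Lq_def using absolutely_integrable_measurable_real[of "{0..1::real}" V] by simp

lemma Lq_norm_1:
  assumes "in_Lq 1 V"
  shows "Lq_norm 1 V = integral {0..1} (\<lambda>x. \<bar>V x\<bar>)"
proof -
  have "integrable I01 (\<lambda>x. \<bar>V x\<bar>)" using assms unfolding in_Lq_def by simp
  then have "integral\<^sup>L I01 (\<lambda>x. \<bar>V x\<bar>) = integral {0..1} (\<lambda>x. \<bar>V x\<bar>)"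
    by (rule lebesgue_integral_eq_integral) simp
  moreover have "0 \<le> integral\<^sup>L I01 (\<lambda>x. \<bar>V x\<bar>)" by simp
  ultimately show ?thesis unfolding Lq_norm_def by simp
qed

lemma in_Lq_Lq_norm_mono:
  assumes q1: "1 \<le> q1" and q12: "q1 \<le> q2" and V: "in_Lq q2 V"
  shows "in_Lq q1 V \<and> Lq_norm q1 V \<le> Lq_norm q2 V"
proof (cases q1)
  case PInf
  then show ?thesis using q12 V by simp
next
  case MInf
  then show ?thesis using q1 by simp
next
  case (real p)
  have p: "1 \<le> p" using q1 real by simp
  have Vm: "V \<in> borel_measurable I01" using V unfolding in_Lq_def by simp
  show ?thesis
  proof (cases q2)
    case PInf
    then show ?thesis
      using I01.Lp_norm_le_esssup[of p V] p Vm V real unfolding in_Lq_def Lq_norm_def by simp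
  next
    case MInf
    then show ?thesis using q12 real by simp
  next
    case (real p')
    then have "p \<le> p'" and "integrable I01 (\<lambda>x. \<bar>V x\<bar> powr p')"
      using q12 \<open>q1 = ereal p\<close> V unfolding in_Lq_def by auto
    then show ?thesis
      using I01.integrable_abs_powr_mono[of p p' V] I01.Lp_norm_mono[of p p' V] p Vm real \<open>q1 = ereal p\<close>
      unfolding in_Lq_def Lq_norm_def by simp
  qed
qed

lemma eventually_in_Lq_bounded:
  assumes Wm: "W \<in> borel_measurable I01" and Wb: "\<And>x. x \<in> {0..1} \<Longrightarrow> \<bar>W x\<bar> \<le> N"
    and WA: "integral {0..1} (\<lambda>x. \<bar>W x\<bar>) < A"
  shows "\<forall>\<^sub>F q in at_right 1. in_Lq (ereal q) W \<and> Lq_norm (ereal q) W \<le> A"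
proof -
  have "integrable I01 (\<lambda>x. \<bar>W x\<bar>)"
    using I01.integrable_abs_powr_bounded[OF Wm _ zero_le_one, where B=N] Wb by simp
  then have "integral\<^sup>L I01 (\<lambda>x. \<bar>W x\<bar>) < A"
    using WA by (simp add: lebesgue_integral_eq_integral)
  then have "\<forall>\<^sub>F q in at_right 1. integral\<^sup>L I01 (\<lambda>x. \<bar>W x\<bar> powr q) powr (1/q) < A"
    using order_tendstoD(2)[OF I01.tendsto_Lp_norm_bounded[OF Wm, where B=N]] Wb by auto
  moreover have "\<forall>\<^sub>F q in at_right (1::real). 1 < q" by (rule eventually_at_right_less)
  ultimately show ?thesis
  proof eventually_elim
    case (elim q)
    then show ?case
      using I01.integrable_abs_powr_bounded[OF Wm, of N q] Wb Wm
      unfolding in_Lq_def Lq_norm_def by simp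
  qed
qed

definition admissible_values :: "real \<Rightarrow> ereal \<Rightarrow> real set" where
  "admissible_values A q = {y 1 | V y. in_Lq q V \<and> Lq_norm q V \<le> A \<and> is_sol V y}"

lemma vq_eq_Sup_admissible_values: "vq A q = Sup (admissible_values A q)"
  unfolding vq_def admissible_values_def ..

lemma admissible_values_antimono:
  "1 \<le> q1 \<Longrightarrow> q1 \<le> q2 \<Longrightarrow> admissible_values A q2 \<subseteq> admissible_values A q1"
  unfolding admissible_values_def using in_Lq_Lq_norm_mono by fastforce

lemma admissible_value_1_le:
  assumes "s \<in> admissible_values A 1"
  shows "s \<le> gronwall_bound (A + 1)"
proof -
  obtain V y z where s: "s = y 1" and V: "in_Lq 1 V" "Lq_norm 1 V \<le> A" and sol: "is_sol_deriv V y z"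
    using assms unfolding admissible_values_def is_sol_iff_is_sol_deriv by blast
  have "\<bar>y 1\<bar> \<le> gronwall_bound (A + 1)"
    using V by (intro is_sol_deriv_abs_le[OF sol]) (auto simp: in_Lq_1_iff Lq_norm_1)
  then show ?thesis using s by simp
qed

lemma bdd_above_admissible_values:
  assumes "1 \<le> q"
  shows "bdd_above (admissible_values A q)"
proof (rule bdd_aboveI)
  fix s assume "s \<in> admissible_values A q"
  then show "s \<le> gronwall_bound (A + 1)"
    using admissible_value_1_le admissible_values_antimono[OF order_refl assms] by blast
qed

lemma zero_potential_admissible: "0 \<le> A \<Longrightarrow> 1 \<in> admissible_values A q"
proof -
  assume "0 \<le> A"
  have "esssup I01 (\<lambda>x. ereal 0) = 0"
    using esssup_const[of I01 "ereal 0"] I01.emeasure_space_1 by (simp add: zero_ereal_def)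
  then have "in_Lq q (\<lambda>x. 0) \<and> Lq_norm q (\<lambda>x. 0) \<le> A"
    unfolding in_Lq_def Lq_norm_def using \<open>0 \<le> A\<close> by simp
  moreover have "is_sol_deriv (\<lambda>x. 0) (\<lambda>t. t) (\<lambda>t. 1)"
    unfolding is_sol_deriv_def
  proof (intro conjI ballI)
    fix t :: real assume "t \<in> {0..1}"
    then show "((\<lambda>t. 1) has_integral (t - 0)) {0..t}"
      using has_integral_const_real[of "1::real" 0 t] by simp
  qed (auto intro: continuous_intros)
  ultimately show ?thesis
    unfolding admissible_values_def is_sol_iff_is_sol_deriv by force
qed

lemma vq_antimono: "0 \<le> A \<Longrightarrow> 1 \<le> q1 \<Longrightarrow> q1 \<le> q2 \<Longrightarrow> vq A q2 \<le> vq A q1"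
  unfolding vq_eq_Sup_admissible_values
  by (intro cSup_subset_mono bdd_above_admissible_values admissible_values_antimono)
     (auto intro: zero_potential_admissible order_trans)

lemma integrable_on_dominated:
  fixes f g :: "real \<Rightarrow> real"
  assumes "f \<in> borel_measurable I01" "g integrable_on {0..1}" "\<And>x. x \<in> {0..1} \<Longrightarrow> \<bar>f x\<bar> \<le> g x"
  shows "f integrable_on {0..1}"
proof -
  have "f absolutely_integrable_on {0..1}"
    using assms(3)
    by (intro measurable_bounded_by_integrable_imp_absolutely_integrable[OF assms(1) _ assms(2)]) auto
  then show ?thesis by (rule set_lebesgue_integral_eq_integral(1))
qed

lemma truncation_L1_approx:
  fixes V :: "real \<Rightarrow> real"
  assumes Vi: "V absolutely_integrable_on {0..1}" and \<eta>: "0 < \<eta>"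
  obtains T N where "T \<in> borel_measurable I01" "\<And>x. \<bar>T x\<bar> \<le> N" "\<And>x. \<bar>T x\<bar> \<le> \<bar>V x\<bar>"
    "\<And>x. \<bar>V x - T x\<bar> \<le> \<bar>V x\<bar>" "integral {0..1} (\<lambda>x. \<bar>V x - T x\<bar>) < \<eta>"
proof -
  define T where "T = (\<lambda>(n::nat) x. if \<bar>V x\<bar> \<le> n then V x else 0)"
  have Vm: "V \<in> borel_measurable I01"
    using Vi absolutely_integrable_measurable_real[of "{0..1::real}" V] by simp
  have Tm: "T n \<in> borel_measurable I01" for n unfolding T_def using Vm by measurable
  have Va: "(\<lambda>x. \<bar>V x\<bar>) integrable_on {0..1}"
    using set_integrable_abs[OF Vi] by (simp add: absolutely_integrable_on_def)
  have "(\<lambda>x. \<bar>V x - T n x\<bar>) integrable_on {0..1}" for n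
    using Vm Tm by (intro integrable_on_dominated[OF _ Va]) (auto simp: T_def)
  then have "(\<lambda>n. integral {0..1} (\<lambda>x. \<bar>V x - T n x\<bar>)) \<longlonglongrightarrow> integral {0..1::real} (\<lambda>x. 0::real)"
  proof (rule dominated_convergence(2)[OF _ Va])
    show "norm \<bar>V x - T n x\<bar> \<le> \<bar>V x\<bar>" for n x unfolding T_def by auto
    fix x :: real
    obtain n0 :: nat where "\<bar>V x\<bar> \<le> real n0" using real_arch_simple by blast
    then have "\<forall>\<^sub>F n in sequentially. \<bar>V x - T n x\<bar> = 0"
      unfolding eventually_sequentially T_def by (intro exI[of _ n0]) auto
    then show "(\<lambda>n. \<bar>V x - T n x\<bar>) \<longlonglongrightarrow> 0" by (rule tendsto_eventually)
  qed
  then have "\<forall>\<^sub>F n in sequentially. integral {0..1} (\<lambda>x. \<bar>V x - T n x\<bar>) < \<eta>"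
    using \<eta> by (intro order_tendstoD(2)) auto
  then obtain n where "integral {0..1} (\<lambda>x. \<bar>V x - T n x\<bar>) < \<eta>"
    unfolding eventually_sequentially by auto
  moreover have "\<bar>T n x\<bar> \<le> real n" "\<bar>T n x\<bar> \<le> \<bar>V x\<bar>" "\<bar>V x - T n x\<bar> \<le> \<bar>V x\<bar>" for x
    by (simp_all add: T_def)
  ultimately show ?thesis by (intro that[OF Tm[of n]])
qed

text \<open>Truncating V and then shrinking it by a factor 1 - c makes the L^1 norm strictly smaller
  than A, which is what leaves room for the L^q norms with q slightly larger than 1.\<close>
lemma bounded_L1_approx:
  fixes V :: "real \<Rightarrow> real"
  assumes Vi: "V absolutely_integrable_on {0..1}" and VA: "integral {0..1} (\<lambda>x. \<bar>V x\<bar>) \<le> A"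
    and A: "0 < A" and \<eta>: "0 < \<eta>"
  obtains W N where "W \<in> borel_measurable I01" "\<And>x. \<bar>W x\<bar> \<le> N"
    "integral {0..1} (\<lambda>x. \<bar>W x\<bar>) < A" "integral {0..1} (\<lambda>x. \<bar>V x - W x\<bar>) < \<eta>"
proof -
  obtain T N where Tm: "T \<in> borel_measurable I01" and TN: "\<And>x. \<bar>T x\<bar> \<le> N"
    and TV: "\<And>x. \<bar>T x\<bar> \<le> \<bar>V x\<bar>" and DV: "\<And>x. \<bar>V x - T x\<bar> \<le> \<bar>V x\<bar>"
    and VT: "integral {0..1} (\<lambda>x. \<bar>V x - T x\<bar>) < \<eta> / 2"
    using truncation_L1_approx[OF Vi, of "\<eta> / 2"] \<eta> by auto
  define c where "c = min (1/2) (\<eta> / (4 * A))"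
  have c: "0 < c" "c \<le> 1/2" "c * A \<le> \<eta> / 4"
    unfolding c_def using \<eta> A by (auto simp: min_def field_simps)
  define W where "W = (\<lambda>x. (1 - c) * T x)"
  have Vm: "V \<in> borel_measurable I01"
    using Vi absolutely_integrable_measurable_real[of "{0..1::real}" V] by simp
  have Va: "(\<lambda>x. \<bar>V x\<bar>) integrable_on {0..1}"
    using set_integrable_abs[OF Vi] by (simp add: absolutely_integrable_on_def)
  have Ta: "(\<lambda>x. \<bar>T x\<bar>) integrable_on {0..1}"
    using Tm TV by (intro integrable_on_dominated[OF _ Va]) auto
  have DT: "(\<lambda>x. \<bar>V x - T x\<bar>) integrable_on {0..1}"
    using Vm Tm DV by (intro integrable_on_dominated[OF _ Va]) auto
  have T_le: "integral {0..1} (\<lambda>x. \<bar>T x\<bar>) \<le> A"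
    using integral_le[OF Ta Va] VA TV by auto
  have WT: "\<bar>W x\<bar> = (1 - c) * \<bar>T x\<bar>" for x unfolding W_def using c by (simp add: abs_mult)
  show ?thesis
  proof
    show "W \<in> borel_measurable I01" unfolding W_def using Tm by measurable
    show "\<bar>W x\<bar> \<le> N" for x
      unfolding WT using c mult_mono[of "1 - c" 1 "\<bar>T x\<bar>" N] TN[of x] by simp
    have "integral {0..1} (\<lambda>x. \<bar>W x\<bar>) = (1 - c) * integral {0..1} (\<lambda>x. \<bar>T x\<bar>)"
      unfolding WT by simp
    also have "\<dots> \<le> (1 - c) * A" using mult_left_mono[OF T_le, of "1 - c"] c by simp
    also have "\<dots> < A" using c A by (simp add: algebra_simps)
    finally show "integral {0..1} (\<lambda>x. \<bar>W x\<bar>) < A" .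
    have bound: "\<bar>V x - W x\<bar> \<le> \<bar>V x - T x\<bar> + c * \<bar>T x\<bar>" for x
      using abs_triangle_ineq[of "V x - T x" "c * T x"] c by (simp add: W_def algebra_simps abs_mult)
    have sum_int: "(\<lambda>x. \<bar>V x - T x\<bar> + c * \<bar>T x\<bar>) integrable_on {0..1}"
      by (intro integrable_add DT integrable_on_mult_right Ta)
    have "(\<lambda>x. \<bar>V x - W x\<bar>) integrable_on {0..1}"
      using Vm Tm bound by (intro integrable_on_dominated[OF _ sum_int]) (auto simp: W_def)
    then have "integral {0..1} (\<lambda>x. \<bar>V x - W x\<bar>) \<le> integral {0..1} (\<lambda>x. \<bar>V x - T x\<bar> + c * \<bar>T x\<bar>)"
      using sum_int bound by (intro integral_le) auto
    also have "\<dots> = integral {0..1} (\<lambda>x. \<bar>V x - T x\<bar>) + c * integral {0..1} (\<lambda>x. \<bar>T x\<bar>)"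
      using integral_add[OF DT integrable_on_mult_right[OF Ta]] by simp
    also have "\<dots> < \<eta>" using VT mult_left_mono[OF T_le less_imp_le[OF c(1)]] c \<eta> by linarith
    finally show "integral {0..1} (\<lambda>x. \<bar>V x - W x\<bar>) < \<eta>" .
  qed
qed

lemma bounded_potential_near:
  assumes A: "0 < A" and V: "in_Lq 1 V" "Lq_norm 1 V \<le> A" and sol_V: "is_sol_deriv V y z"
    and \<epsilon>: "0 < \<epsilon>"
  obtains W N w where "W \<in> borel_measurable I01" "\<And>x. \<bar>W x\<bar> \<le> N"
    "integral {0..1} (\<lambda>x. \<bar>W x\<bar>) < A" "is_sol W w" "y 1 - \<epsilon> < w 1"
proof -
  have Vi: "V absolutely_integrable_on {0..1}" and VA: "integral {0..1} (\<lambda>x. \<bar>V x\<bar>) \<le> A"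
    using V by (auto simp: in_Lq_1_iff Lq_norm_1)
  define K where "K = gronwall_bound (A + 1)"
  have "0 < K" unfolding K_def by (rule gronwall_bound_pos)
  then have "0 < \<epsilon> / (K * K)" using \<epsilon> by simp
  then obtain W N where Wm: "W \<in> borel_measurable I01" and Wb: "\<And>x. \<bar>W x\<bar> \<le> N"
    and WA: "integral {0..1} (\<lambda>x. \<bar>W x\<bar>) < A"
    and VW: "integral {0..1} (\<lambda>x. \<bar>V x - W x\<bar>) < \<epsilon> / (K * K)"
    using bounded_L1_approx[OF Vi VA A] by blast
  obtain w r where sol_W: "is_sol_deriv W w r" using exists_is_sol_deriv_bounded[OF Wm Wb] by blast
  have Wi: "W absolutely_integrable_on {0..1}" using bounded_measurable_absolutely_integrable[OF Wm Wb] .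
  have "\<bar>w t\<bar> \<le> K" if "t \<in> {0..1}" for t
    unfolding K_def using WA that by (intro is_sol_deriv_abs_le[OF sol_W Wi]) auto
  then have "\<bar>y 1 - w 1\<bar> \<le> K * integral {0..1} (\<lambda>x. \<bar>V x - W x\<bar>) * K"
    unfolding K_def by (intro is_sol_deriv_dist_le[OF sol_V sol_W Vi Wi VA]) auto
  also have "\<dots> < K * (\<epsilon> / (K * K)) * K"
    using VW \<open>0 < K\<close> by (intro mult_strict_right_mono mult_strict_left_mono) auto
  also have "\<dots> = \<epsilon>" using \<open>0 < K\<close> by simp
  finally have "y 1 - \<epsilon> < w 1" by linarith
  then show ?thesis using that[OF Wm Wb WA] sol_W is_sol_iff_is_sol_deriv by blast
qed

lemma eventually_gt_vq:
  assumes A: "0 < A" and a: "a < vq A 1"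
  shows "\<forall>\<^sub>F q in at_right 1. a < vq A (ereal q)"
proof -
  obtain V y z where V: "in_Lq 1 V" "Lq_norm 1 V \<le> A" and sol_V: "is_sol_deriv V y z"
    and "a < y 1"
    using less_cSupD[OF _ a[unfolded vq_eq_Sup_admissible_values]] zero_potential_admissible[of A] A
    unfolding admissible_values_def is_sol_iff_is_sol_deriv by fastforce
  then have "0 < y 1 - a" by simp
  then obtain W N w where Wm: "W \<in> borel_measurable I01" and Wb: "\<And>x. \<bar>W x\<bar> \<le> N"
    and WA: "integral {0..1} (\<lambda>x. \<bar>W x\<bar>) < A" and sol_W: "is_sol W w"
    and "y 1 - (y 1 - a) < w 1"
    using bounded_potential_near[OF A V sol_V] by blast
  then have "a < w 1" by simp
  have "\<forall>\<^sub>F q in at_right 1. in_Lq (ereal q) W \<and> Lq_norm (ereal q) W \<le> A"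
    using eventually_in_Lq_bounded[OF Wm _ WA] Wb by blast
  moreover have "\<forall>\<^sub>F q in at_right (1::real). 1 < q" by (rule eventually_at_right_less)
  ultimately show ?thesis
  proof eventually_elim
    case (elim q)
    then have "w 1 \<in> admissible_values A (ereal q)"
      unfolding admissible_values_def using sol_W by blast
    then have "w 1 \<le> vq A (ereal q)"
      unfolding vq_eq_Sup_admissible_values
      by (rule cSup_upper) (use elim in \<open>simp add: bdd_above_admissible_values\<close>)
    then show ?case using \<open>a < w 1\<close> by simp
  qed
qed

theorem mainTheorem11:
  fixes A :: real
  assumes "A > 0"
  shows "(\<forall>q1 q2. 1 \<le> q1 \<longrightarrow> q1 \<le> q2 \<longrightarrow> vq A q2 \<le> vq A q1)
         \<and> ((\<lambda>q::real. vq A (ereal q)) \<longlongrightarrow> vq A 1) (at_right 1)"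
proof
  show antimono: "\<forall>q1 q2. 1 \<le> q1 \<longrightarrow> q1 \<le> q2 \<longrightarrow> vq A q2 \<le> vq A q1"
    using vq_antimono assms by auto
  show "((\<lambda>q::real. vq A (ereal q)) \<longlongrightarrow> vq A 1) (at_right 1)"
  proof (rule order_tendstoI)
    fix a assume "a < vq A 1"
    then show "\<forall>\<^sub>F q in at_right 1. a < vq A (ereal q)" by (rule eventually_gt_vq[OF assms])
  next
    fix a assume "vq A 1 < a"
    moreover have "\<forall>\<^sub>F q in at_right 1. vq A (ereal q) \<le> vq A 1"
      using eventually_at_right_less[of 1] by eventually_elim (use antimono in auto)
    ultimately show "\<forall>\<^sub>F q in at_right 1. vq A (ereal q) < a"
      by (auto elim: eventually_mono)
  qed
qed

end
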